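(* Let $n\ge3$ and let $V:\mathbb{R}^n\to\mathbb{R}$ be $C^1$ and satisfy: there is $L>0$ such that for all $x$ with $|x_1|>L$, $-x_j\,\partial_{x_j}V(x)\ge0$ for every $j=1,\dots,n$. Then for every $x'\in\mathbb{R}^n$ and every $x\notin[-L,L]\times\mathbb{R}^{n-1}$ (with $x\notin\operatorname{sym}\{x'\}$), $$ i\Big[V,\sum_{c\in\operatorname{sym}\{x'\}}\gamma_c^{Mor}\Big](x)=\sum_{j=1}^n\Big\{-2\,\partial_{x_j}V(x)\sum_{c\in\operatorname{sym}\{x'\}}\frac{x_j-c_j}{|x-c|}\Big\}\ \ge\ 0. $$
   Context: $\gamma_c^{Mor}=-i\big(\frac{x-c}{|x-c|}\cdot\nabla+\nabla\cdot\frac{x-c}{|x-c|}\big)$, so $i[V,\gamma_c^{Mor}]$ is multiplication by $-2\frac{x-c}{|x-c|}\cdot\nabla V$. For $x'=(x'_1,\dots,x'_n)$, $\operatorname{sym}\{x'\}=\{(\pm x'_1,\dots,\pm x'_n)\}$, the set of all points obtained by independent sign changes of the coordinates (as a set, so repeated points counted once). *)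

theory Defs
  imports "HOL-Analysis.Analysis"
begin

text \<open>R^n is modelled as real^'n with 'n a finite well-ordered index type;
  the first coordinate x_1 is the component at the least index.\<close>
definition first_idx :: "'n::{finite,wellorder}" where
  "first_idx = (LEAST i. True)"

definition partial :: "'n::finite \<Rightarrow> (real^'n \<Rightarrow> real) \<Rightarrow> real^'n \<Rightarrow> real" where
  "partial j V x = frechet_derivative V (at x) (axis j 1)"

definition C1_fun :: "(real^'n::finite \<Rightarrow> real) \<Rightarrow> bool" where
  "C1_fun V \<longleftrightarrow> (\<forall>x. V differentiable (at x)) \<and> (\<forall>j. continuous_on UNIV (partial j V))"

definition sym_set :: "real^'n::finite \<Rightarrow> (real^'n) set" where
  "sym_set x' = {(\<chi> j. s j * x' $ j) | s. \<forall>j. s j \<in> {-1, 1}}"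

text \<open>The multiplication function i[V, gamma_c^Mor](x) = -2 (x-c)/|x-c| . grad V(x).\<close>
definition mor_commutator :: "(real^'n::finite \<Rightarrow> real) \<Rightarrow> real^'n \<Rightarrow> real^'n \<Rightarrow> real" where
  "mor_commutator V c x = -2 * (\<Sum>j\<in>UNIV. ((x $ j - c $ j) / norm (x - c)) * partial j V x)"

end

theory Submission
  imports Defs
begin

text \<open>The j-th summand is controlled by pairing each centre c with its reflection c' in the
  hyperplane x_j = 0: the two points have the same distance R in the other coordinates, so the
  pair contributes h(x_j - c_j) + h(x_j + c_j) with h(t) = t / sqrt (R + t^2) odd and increasing,
  and this has the sign of the sum of the arguments, 2 x_j. Hence every inner sum has the sign of
  x_j, which by hypothesis is opposite to that of the partial derivative.\<close>

lemma divide_sqrt_mono_nonneg: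
  fixes R s t :: real
  assumes "0 \<le> R" "0 \<le> s" "s \<le> t"
  shows "s / sqrt (R + s\<^sup>2) \<le> t / sqrt (R + t\<^sup>2)"
proof (cases "s = 0")
  case True
  then show ?thesis using assms by simp
next
  case False
  then have pos: "0 < sqrt (R + s\<^sup>2)" "0 < sqrt (R + t\<^sup>2)"
    using assms by (auto intro: add_nonneg_pos)
  have "s\<^sup>2 * R \<le> t\<^sup>2 * R"
    using assms by (intro mult_right_mono power_mono) auto
  then have "s\<^sup>2 * (R + t\<^sup>2) \<le> t\<^sup>2 * (R + s\<^sup>2)"
    by (simp add: algebra_simps)
  then have "sqrt (s\<^sup>2 * (R + t\<^sup>2)) \<le> sqrt (t\<^sup>2 * (R + s\<^sup>2))"
    by (rule real_sqrt_le_mono)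
  then have "s * sqrt (R + t\<^sup>2) \<le> t * sqrt (R + s\<^sup>2)"
    using assms by (simp add: real_sqrt_mult)
  then show ?thesis
    using pos by (simp add: divide_simps mult.commute)
qed

text \<open>No positivity of the denominators is needed: where sqrt (R + t^2) = 0 we have t = 0 and
  the quotient is 0.\<close>
lemma divide_sqrt_mono:
  fixes R s t :: real
  assumes "0 \<le> R" "s \<le> t"
  shows "s / sqrt (R + s\<^sup>2) \<le> t / sqrt (R + t\<^sup>2)"
proof -
  consider "0 \<le> s" | "t \<le> 0" | "s \<le> 0" "0 \<le> t" by linarith
  then show ?thesis
  proof cases
    case 1
    then show ?thesis using assms divide_sqrt_mono_nonneg by blast
  next
    case 2
    then have "-t / sqrt (R + (-t)\<^sup>2) \<le> -s / sqrt (R + (-s)\<^sup>2)"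
      using assms by (intro divide_sqrt_mono_nonneg) auto
    then show ?thesis by simp
  next
    case 3
    have "s / sqrt (R + s\<^sup>2) \<le> 0"
      using 3 assms(1) by (intro divide_nonpos_nonneg) simp_all
    moreover have "0 \<le> t / sqrt (R + t\<^sup>2)"
      using 3 assms(1) by simp
    ultimately show ?thesis by linarith
  qed
qed

lemma divide_sqrt_add_nonneg:
  fixes R a b :: real
  assumes "0 \<le> R" "0 \<le> a + b"
  shows "0 \<le> a / sqrt (R + a\<^sup>2) + b / sqrt (R + b\<^sup>2)"
  using divide_sqrt_mono[OF assms(1), of "-a" b] assms(2) by simp

lemma divide_sqrt_add_nonpos:
  fixes R a b :: real
  assumes "0 \<le> R" "a + b \<le> 0"
  shows "a / sqrt (R + a\<^sup>2) + b / sqrt (R + b\<^sup>2) \<le> 0"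
  using divide_sqrt_add_nonneg[OF assms(1), of "-a" "-b"] assms(2) by simp

definition reflect_coord :: "'n::finite \<Rightarrow> real^'n \<Rightarrow> real^'n" where
  "reflect_coord j c = (\<chi> k. if k = j then - c $ k else c $ k)"

lemma reflect_coord_nth [simp]:
  "reflect_coord j c $ k = (if k = j then - c $ k else c $ k)"
  by (simp add: reflect_coord_def)

lemma reflect_coord_reflect_coord [simp]: "reflect_coord j (reflect_coord j c) = c"
  by (simp add: vec_eq_iff)

lemma norm_eq_sqrt_split_coord:
  fixes y :: "real^'n::finite"
  shows "norm y = sqrt ((\<Sum>k\<in>UNIV - {j}. (y $ k)\<^sup>2) + (y $ j)\<^sup>2)"
  unfolding norm_eq_sqrt_inner inner_vec_def
  by (simp add: sum.remove[of UNIV j] power2_eq_square add.commute)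

lemma pair_reflect_coord_sum:
  fixes x c :: "real^'n::finite" and j :: 'n
  defines "g \<equiv> \<lambda>c. (x $ j - c $ j) / norm (x - c)"
  shows "0 \<le> x $ j \<Longrightarrow> 0 \<le> g c + g (reflect_coord j c)"
    and "x $ j \<le> 0 \<Longrightarrow> g c + g (reflect_coord j c) \<le> 0"
proof -
  define R where "R = (\<Sum>k\<in>UNIV - {j}. (x $ k - c $ k)\<^sup>2)"
  have "0 \<le> R" unfolding R_def by (simp add: sum_nonneg)
  have "(\<Sum>k\<in>UNIV - {j}. ((x - reflect_coord j c) $ k)\<^sup>2) = R"
    unfolding R_def by (intro sum.cong) auto
  then have pair: "g c + g (reflect_coord j c)
      = (x $ j - c $ j) / sqrt (R + (x $ j - c $ j)\<^sup>2) + (x $ j + c $ j) / sqrt (R + (x $ j + c $ j)\<^sup>2)"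
    unfolding g_def R_def
    by (simp add: norm_eq_sqrt_split_coord[of _ j])
  show "0 \<le> x $ j \<Longrightarrow> 0 \<le> g c + g (reflect_coord j c)"
    unfolding pair using \<open>0 \<le> R\<close> by (intro divide_sqrt_add_nonneg) auto
  show "x $ j \<le> 0 \<Longrightarrow> g c + g (reflect_coord j c) \<le> 0"
    unfolding pair using \<open>0 \<le> R\<close> by (intro divide_sqrt_add_nonpos) auto
qed

lemma sum_reflect_coord_double:
  fixes g :: "real^'n::finite \<Rightarrow> real"
  assumes "\<And>c. c \<in> A \<Longrightarrow> reflect_coord j c \<in> A"
  shows "2 * sum g A = (\<Sum>c\<in>A. g c + g (reflect_coord j c))"
proof -
  have "bij_betw (reflect_coord j) A A"
    by (rule bij_betw_byWitness[where f' = "reflect_coord j"]) (auto intro: assms image_eqI)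
  then have "sum g A = (\<Sum>c\<in>A. g (reflect_coord j c))"
    by (rule sum.reindex_bij_betw[symmetric])
  then show ?thesis by (simp add: sum.distrib)
qed

lemma sum_direction_sign:
  fixes x :: "real^'n::finite" and j :: 'n
  assumes "\<And>c. c \<in> A \<Longrightarrow> reflect_coord j c \<in> A"
  defines "S \<equiv> \<Sum>c\<in>A. (x $ j - c $ j) / norm (x - c)"
  shows "0 \<le> x $ j \<Longrightarrow> 0 \<le> S"
    and "x $ j \<le> 0 \<Longrightarrow> S \<le> 0"
proof -
  define g where "g = (\<lambda>c. (x $ j - c $ j) / norm (x - c))"
  have double: "2 * S = (\<Sum>c\<in>A. g c + g (reflect_coord j c))"
    unfolding S_def g_def by (rule sum_reflect_coord_double[OF assms(1)])
  show "0 \<le> S" if "0 \<le> x $ j"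
  proof -
    have "0 \<le> (\<Sum>c\<in>A. g c + g (reflect_coord j c))"
      using pair_reflect_coord_sum(1)[OF that] unfolding g_def by (intro sum_nonneg)
    then show ?thesis using double by linarith
  qed
  show "S \<le> 0" if "x $ j \<le> 0"
  proof -
    have "(\<Sum>c\<in>A. g c + g (reflect_coord j c)) \<le> 0"
      using pair_reflect_coord_sum(2)[OF that] unfolding g_def by (intro sum_nonpos)
    then show ?thesis using double by linarith
  qed
qed

lemma reflect_coord_sym_set:
  assumes "c \<in> sym_set x'"
  shows "reflect_coord j c \<in> sym_set x'"
proof -
  obtain s where s: "c = (\<chi> k. s k * x' $ k)" "\<forall>k. s k \<in> {-1, 1}"
    using assms unfolding sym_set_def by blast
  have "reflect_coord j c = (\<chi> k. (s(j := - s j)) k * x' $ k)"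
    using s by (simp add: vec_eq_iff)
  moreover have "\<forall>k. (s(j := - s j)) k \<in> {-1, 1}"
    using s(2) by auto
  ultimately show ?thesis
    unfolding sym_set_def by blast
qed

lemma sum_mor_commutator:
  "(\<Sum>c\<in>A. mor_commutator V c x)
     = (\<Sum>j\<in>UNIV. - 2 * partial j V x * (\<Sum>c\<in>A. (x $ j - c $ j) / norm (x - c)))"
proof -
  have "(\<Sum>c\<in>A. mor_commutator V c x)
      = (\<Sum>c\<in>A. \<Sum>j\<in>UNIV. - 2 * partial j V x * ((x $ j - c $ j) / norm (x - c)))"
    unfolding mor_commutator_def sum_distrib_left
    by (intro sum.cong refl) (simp add: algebra_simps minus_divide_left)
  also have "\<dots> = (\<Sum>j\<in>UNIV. \<Sum>c\<in>A. - 2 * partial j V x * ((x $ j - c $ j) / norm (x - c)))"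
    by (rule sum.swap)
  also have "\<dots> = (\<Sum>j\<in>UNIV. - 2 * partial j V x * (\<Sum>c\<in>A. (x $ j - c $ j) / norm (x - c)))"
    by (simp add: sum_distrib_left)
  finally show ?thesis .
qed

lemma mult_nonneg_of_opposite_signs:
  fixes t p S :: real
  assumes "0 \<le> - t * p" "0 \<le> t \<Longrightarrow> 0 \<le> S" "t \<le> 0 \<Longrightarrow> S \<le> 0"
  shows "0 \<le> - 2 * p * S"
proof -
  have tp: "t * p \<le> 0" using assms(1) by simp
  consider "0 < t" | "t < 0" | "t = 0" by linarith
  then show ?thesis
  proof cases
    case 1
    then have "p \<le> 0" "0 \<le> S" using tp assms(2) by (auto simp: mult_le_0_iff)
    then show ?thesis by (simp add: mult_nonpos_nonneg)
  next
    case 2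
    then have "0 \<le> p" "S \<le> 0" using tp assms(3) by (auto simp: mult_le_0_iff)
    then show ?thesis by (simp add: mult_nonneg_nonpos)
  next
    case 3
    then show ?thesis using assms by simp
  qed
qed

lemma sum_mor_commutator_sym_set_nonneg:
  fixes V :: "real^'n::finite \<Rightarrow> real"
  assumes "\<And>j. 0 \<le> - (x $ j) * partial j V x"
  shows "0 \<le> (\<Sum>j\<in>UNIV. - 2 * partial j V x * (\<Sum>c\<in>sym_set x'. (x $ j - c $ j) / norm (x - c)))"
proof (rule sum_nonneg)
  fix j
  have closed: "\<And>c. c \<in> sym_set x' \<Longrightarrow> reflect_coord j c \<in> sym_set x'"
    by (rule reflect_coord_sym_set)
  show "0 \<le> - 2 * partial j V x * (\<Sum>c\<in>sym_set x'. (x $ j - c $ j) / norm (x - c))"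
    by (rule mult_nonneg_of_opposite_signs[OF assms sum_direction_sign[OF closed]])
qed

theorem lemma4p5:
  fixes V :: "real^'n::{finite,wellorder} \<Rightarrow> real" and L :: real
  assumes n3: "CARD('n) \<ge> 3"
    and C1: "C1_fun V"
    and Lpos: "L > 0"
    and hyp: "\<And>x j. \<bar>x $ first_idx\<bar> > L \<Longrightarrow> - (x $ j) * partial j V x \<ge> 0"
  shows "\<forall>x' x. \<bar>x $ first_idx\<bar> > L \<longrightarrow> x \<notin> sym_set x' \<longrightarrow>
           (\<Sum>c\<in>sym_set x'. mor_commutator V c x)
             = (\<Sum>j\<in>UNIV. - 2 * partial j V x * (\<Sum>c\<in>sym_set x'. (x $ j - c $ j) / norm (x - c)))
         \<and> (\<Sum>j\<in>UNIV. - 2 * partial j V x * (\<Sum>c\<in>sym_set x'. (x $ j - c $ j) / norm (x - c))) \<ge> 0"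
proof (intro allI impI conjI sum_mor_commutator)
  fix x' x :: "(real, 'n) vec"
  assume far: "\<bar>x $ first_idx\<bar> > L"
  show "(\<Sum>j\<in>UNIV. - 2 * partial j V x * (\<Sum>c\<in>sym_set x'. (x $ j - c $ j) / norm (x - c))) \<ge> 0"
    by (rule sum_mor_commutator_sym_set_nonneg, rule hyp[OF far])
qed

end
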